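(* Let $D$ be a pv-monoid (idempotent, with symmetric valuation function) that is left-$\oplus$-distributive and in which $\otimes$ is commutative and associative. Let $P$ be a nonempty finite set of ports, $d_1,d_2\in D$ and $\zeta_1,\zeta_2\in PCL(D,P)$. Then \[(d_1\otimes\zeta_1)\uplus(d_2\otimes\zeta_2)\equiv d_1\otimes d_2\otimes(\zeta_1\uplus\zeta_2).\]
   Context: A valuation monoid $(D,\oplus,\mathrm{val},0)$ consists of a commutative monoid $(D,\oplus,0)$ and a map $\mathrm{val}:D^+\to D$ ($D^+$ = nonempty finite sequences over $D$) with $\mathrm{val}(d)=d$ and $\mathrm{val}(d_1,\dots,d_n)=0$ whenever some $d_i=0$. A pv-monoid $(D,\oplus,\mathrm{val},\otimes,0,1)$ is a valuation monoid with a binary operation $\otimes$ and an element $1$ such that $\mathrm{val}(1,\dots,1)=1$ for any $n\ge1$ arguments, $0\otimes d=d\otimes0=0$, $1\otimes d=d\otimes1=d$. Standing assumption: $D$ is idempotent and $\mathrm{val}$ is symmetric. $D$ is left-$\oplus$-distributive if $d\otimes(d_1\oplus d_2)=(d\otimes d_1)\oplus(d\otimes d_2)$. $I(P)$ is the set of nonempty subsets of $P$, $C(P)$ the set of nonempty subsets of $I(P)$. PIL formulas: $\phi::=true\mid p\mid\overline{\phi}\mid\phi\vee\phi$ ($p\in P$), $\alpha\models_i p$ iff $p\in\alpha$, other connectives as usual. PCL formulas: $f::=true\mid\phi\mid\neg f\mid f\sqcup f\mid f+f$; $\gamma\models\phi$ iff every $\alpha\in\gamma$ satisfies $\phi$;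 $\neg,\sqcup$ are complement and union; $\gamma\models f_1+f_2$ iff $\gamma=\gamma_1\cup\gamma_2$ with $\gamma_1,\gamma_2\in C(P)$, $\gamma_1\models f_1,\gamma_2\models f_2$. w$_{\text{pvm}}$PCL formulas ($PCL(D,P)$): $\zeta::=d\mid f\mid\zeta\oplus\zeta\mid\zeta\otimes\zeta\mid\zeta\uplus\zeta\mid *\zeta$; semantics $\|\zeta\|:C(P)\to D$: $\|d\|(\gamma)=d$; $\|f\|(\gamma)\in\{0,1\}$ is $1$ iff $\gamma\models f$; $\oplus,\otimes$ pointwise; $\|\zeta_1\uplus\zeta_2\|(\gamma)=\bigoplus(\|\zeta_1\|(\gamma_1)\otimes\|\zeta_2\|(\gamma_2))$ over disjoint $\gamma_1,\gamma_2\in C(P)$ with union $\gamma$; $\|*\zeta\|(\gamma)=\bigoplus_{n>0}\bigoplus\mathrm{val}(\|\zeta\|(\gamma_1),\dots,\|\zeta\|(\gamma_n))$ over pairwise disjoint $\gamma_1,\dots,\gamma_n\in C(P)$ with union $\gamma$. $\equiv$ means equality of semantics on all of $C(P)$. An empty $\oplus$-sum is $0$. *)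

theory Defs
  imports Main "HOL-Library.Multiset"
begin

record 'd pvm =
  pl :: "'d \<Rightarrow> 'd \<Rightarrow> 'd"
  vl :: "'d list \<Rightarrow> 'd"           (* val, only meaningful on nonempty lists *)
  tm :: "'d \<Rightarrow> 'd \<Rightarrow> 'd"
  zr :: "'d"
  on :: "'d"

definition valuation_monoid :: "'d pvm \<Rightarrow> bool" where
  "valuation_monoid D \<longleftrightarrow>
     (\<forall>a b c. pl D (pl D a b) c = pl D a (pl D b c)) \<and>
     (\<forall>a b. pl D a b = pl D b a) \<and>
     (\<forall>a. pl D (zr D) a = a) \<and>
     (\<forall>d. vl D [d] = d) \<and>
     (\<forall>ds. ds \<noteq> [] \<and> zr D \<in> set ds \<longrightarrow> vl D ds = zr D)"

definition pv_monoid :: "'d pvm \<Rightarrow> bool" where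
  "pv_monoid D \<longleftrightarrow> valuation_monoid D \<and>
     (\<forall>n\<ge>1. vl D (replicate n (on D)) = on D) \<and>
     (\<forall>d. tm D (zr D) d = zr D \<and> tm D d (zr D) = zr D) \<and>
     (\<forall>d. tm D (on D) d = d \<and> tm D d (on D) = d)"

definition idempotent_pvm :: "'d pvm \<Rightarrow> bool" where
  "idempotent_pvm D \<longleftrightarrow> (\<forall>d. pl D d d = d)"

definition symmetric_val :: "'d pvm \<Rightarrow> bool" where
  "symmetric_val D \<longleftrightarrow> (\<forall>xs ys. xs \<noteq> [] \<and> mset xs = mset ys \<longrightarrow> vl D xs = vl D ys)"

definition left_plus_distributive :: "'d pvm \<Rightarrow> bool" where
  "left_plus_distributive D \<longleftrightarrow>
     (\<forall>d d1 d2. tm D d (pl D d1 d2) = pl D (tm D d d1) (tm D d d2))"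

definition times_comm_assoc :: "'d pvm \<Rightarrow> bool" where
  "times_comm_assoc D \<longleftrightarrow> (\<forall>a b. tm D a b = tm D b a) \<and>
     (\<forall>a b c. tm D (tm D a b) c = tm D a (tm D b c))"

definition bigplus :: "'d pvm \<Rightarrow> ('i \<Rightarrow> 'd) \<Rightarrow> 'i set \<Rightarrow> 'd" where
  "bigplus D f I = Finite_Set.fold (\<lambda>x a. pl D (f x) a) (zr D) I"

definition IP :: "'p set \<Rightarrow> 'p set set" where
  "IP P = {a. a \<subseteq> P \<and> a \<noteq> {}}"

definition CP :: "'p set \<Rightarrow> 'p set set set" where
  "CP P = {g. g \<subseteq> IP P \<and> g \<noteq> {}}"

datatype 'p pil = ITrue | IPort 'p | INeg "'p pil" | IOr "'p pil" "'p pil"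

fun pil_sat :: "'p set \<Rightarrow> 'p pil \<Rightarrow> bool" where
  "pil_sat a ITrue = True"
| "pil_sat a (IPort p) = (p \<in> a)"
| "pil_sat a (INeg f) = (\<not> pil_sat a f)"
| "pil_sat a (IOr f g) = (pil_sat a f \<or> pil_sat a g)"

fun pil_ports :: "'p pil \<Rightarrow> 'p set" where
  "pil_ports ITrue = {}"
| "pil_ports (IPort p) = {p}"
| "pil_ports (INeg f) = pil_ports f"
| "pil_ports (IOr f g) = pil_ports f \<union> pil_ports g"

datatype 'p pcl = CTrue | CPil "'p pil" | CNot "'p pcl" | CUn "'p pcl" "'p pcl"
  | CPlus "'p pcl" "'p pcl"

fun pcl_sat :: "'p set \<Rightarrow> 'p set set \<Rightarrow> 'p pcl \<Rightarrow> bool" where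
  "pcl_sat P g CTrue = True"
| "pcl_sat P g (CPil f) = (\<forall>a\<in>g. pil_sat a f)"
| "pcl_sat P g (CNot f) = (\<not> pcl_sat P g f)"
| "pcl_sat P g (CUn f1 f2) = (pcl_sat P g f1 \<or> pcl_sat P g f2)"
| "pcl_sat P g (CPlus f1 f2) = (\<exists>g1 g2. g1 \<in> CP P \<and> g2 \<in> CP P \<and> g = g1 \<union> g2 \<and>
      pcl_sat P g1 f1 \<and> pcl_sat P g2 f2)"

fun pcl_ports :: "'p pcl \<Rightarrow> 'p set" where
  "pcl_ports CTrue = {}"
| "pcl_ports (CPil f) = pil_ports f"
| "pcl_ports (CNot f) = pcl_ports f"
| "pcl_ports (CUn f g) = pcl_ports f \<union> pcl_ports g"
| "pcl_ports (CPlus f g) = pcl_ports f \<union> pcl_ports g"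

datatype ('d, 'p) wpcl = WConst 'd | WF "'p pcl" | WPlus "('d,'p) wpcl" "('d,'p) wpcl"
  | WTimes "('d,'p) wpcl" "('d,'p) wpcl" | WUplus "('d,'p) wpcl" "('d,'p) wpcl"
  | WStar "('d,'p) wpcl"

fun wpcl_ports :: "('d,'p) wpcl \<Rightarrow> 'p set" where
  "wpcl_ports (WConst d) = {}"
| "wpcl_ports (WF f) = pcl_ports f"
| "wpcl_ports (WPlus a b) = wpcl_ports a \<union> wpcl_ports b"
| "wpcl_ports (WTimes a b) = wpcl_ports a \<union> wpcl_ports b"
| "wpcl_ports (WUplus a b) = wpcl_ports a \<union> wpcl_ports b"
| "wpcl_ports (WStar a) = wpcl_ports a"

definition PCL :: "'p set \<Rightarrow> ('d,'p) wpcl set" where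
  "PCL P = {z. wpcl_ports z \<subseteq> P}"

definition dec2 :: "'p set \<Rightarrow> 'p set set \<Rightarrow> ('p set set \<times> 'p set set) set" where
  "dec2 P g = {(g1, g2). g1 \<in> CP P \<and> g2 \<in> CP P \<and> g1 \<inter> g2 = {} \<and> g1 \<union> g2 = g}"

definition decn :: "'p set \<Rightarrow> 'p set set \<Rightarrow> 'p set set list set" where
  "decn P g = {gs. gs \<noteq> [] \<and> (\<forall>x\<in>set gs. x \<in> CP P) \<and>
     (\<forall>i<length gs. \<forall>j<length gs. i \<noteq> j \<longrightarrow> gs ! i \<inter> gs ! j = {}) \<and>
     \<Union>(set gs) = g}"

fun wsem :: "'d pvm \<Rightarrow> 'p set \<Rightarrow> ('d,'p) wpcl \<Rightarrow> 'p set set \<Rightarrow> 'd" where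
  "wsem D P (WConst d) g = d"
| "wsem D P (WF f) g = (if pcl_sat P g f then on D else zr D)"
| "wsem D P (WPlus a b) g = pl D (wsem D P a g) (wsem D P b g)"
| "wsem D P (WTimes a b) g = tm D (wsem D P a g) (wsem D P b g)"
| "wsem D P (WUplus a b) g =
     bigplus D (\<lambda>(g1, g2). tm D (wsem D P a g1) (wsem D P b g2)) (dec2 P g)"
| "wsem D P (WStar a) g =
     bigplus D (\<lambda>gs. vl D (map (wsem D P a) gs)) (decn P g)"

definition wequiv :: "'d pvm \<Rightarrow> 'p set \<Rightarrow> ('d,'p) wpcl \<Rightarrow> ('d,'p) wpcl \<Rightarrow> bool" where
  "wequiv D P a b \<longleftrightarrow> (\<forall>g\<in>CP P. wsem D P a g = wsem D P b g)"

end

theory Submission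
  imports Defs
begin

text \<open>Both sides are \<oplus>-sums over the finitely many decompositions of a configuration into two
  disjoint parts. Commutativity and associativity of \<otimes> turn each summand of the left side into
  \<open>(d1 \<otimes> d2) \<otimes> (\<zeta>1(\<gamma>1) \<otimes> \<zeta>2(\<gamma>2))\<close>, and left-\<oplus>-distributivity pulls the common factor
  \<open>d1 \<otimes> d2\<close> out of the sum.\<close>

lemma valuation_monoid_comm_monoid_set:
  assumes "valuation_monoid D"
  shows "comm_monoid_set (pl D) (zr D)"
proof -
  have "comm_monoid (pl D) (zr D)"
    using assms unfolding valuation_monoid_def by unfold_locales auto
  then show ?thesis by (simp add: comm_monoid_set_def)
qed

lemma bigplus_eq_comm_monoid_set_F:
  assumes "valuation_monoid D"
  shows "bigplus D f I = comm_monoid_set.F (pl D) (zr D) f I"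
  using comm_monoid_set.eq_fold[OF valuation_monoid_comm_monoid_set[OF assms]]
  unfolding bigplus_def comp_def by (rule sym)

lemma bigplus_tm_distrib_left:
  assumes "pv_monoid D" and "left_plus_distributive D" and "finite I"
  shows "tm D c (bigplus D f I) = bigplus D (\<lambda>x. tm D c (f x)) I"
proof -
  have "valuation_monoid D" using assms(1) by (simp add: pv_monoid_def)
  then interpret plus: comm_monoid_set "pl D" "zr D"
    by (rule valuation_monoid_comm_monoid_set)
  show ?thesis
    unfolding bigplus_eq_comm_monoid_set_F[OF \<open>valuation_monoid D\<close>]
    using assms(3)
  proof (induction I rule: finite_induct)
    case empty
    then show ?case using assms(1) by (simp add: pv_monoid_def)
  next
    case (insert x F)
    then show ?case using assms(2) by (simp add: left_plus_distributive_def)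
  qed
qed

lemma finite_dec2:
  assumes "finite P"
  shows "finite (dec2 P g)"
proof (rule finite_subset)
  show "dec2 P g \<subseteq> Pow (Pow P) \<times> Pow (Pow P)"
    unfolding dec2_def CP_def IP_def by auto
  show "finite (Pow (Pow P) \<times> Pow (Pow P))"
    using assms by simp
qed

lemma tm_interchange:
  assumes "times_comm_assoc D"
  shows "tm D (tm D a b) (tm D c d) = tm D (tm D a c) (tm D b d)"
  using assms unfolding times_comm_assoc_def by metis

theorem mainTheorem13:
  fixes D :: "'d pvm" and P :: "'p set" and d1 d2 :: 'd and z1 z2 :: "('d,'p) wpcl"
  assumes "pv_monoid D" and "idempotent_pvm D" and "symmetric_val D"
    and "left_plus_distributive D" and "times_comm_assoc D"
    and "finite P" and "P \<noteq> {}"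
    and "z1 \<in> PCL P" and "z2 \<in> PCL P"
  shows "wequiv D P (WUplus (WTimes (WConst d1) z1) (WTimes (WConst d2) z2))
                    (WTimes (WTimes (WConst d1) (WConst d2)) (WUplus z1 z2))"
  unfolding wequiv_def
proof
  fix g
  let ?summand = "\<lambda>(g1, g2). tm D (wsem D P z1 g1) (wsem D P z2 g2)"
  have "wsem D P (WUplus (WTimes (WConst d1) z1) (WTimes (WConst d2) z2)) g =
        bigplus D (\<lambda>x. tm D (tm D d1 d2) (?summand x)) (dec2 P g)"
    by (simp only: wsem.simps split_beta' tm_interchange[OF assms(5)])
  also have "\<dots> = tm D (tm D d1 d2) (bigplus D ?summand (dec2 P g))"
    by (rule bigplus_tm_distrib_left[OF assms(1,4) finite_dec2[OF assms(6)], symmetric])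
  also have "\<dots> = wsem D P (WTimes (WTimes (WConst d1) (WConst d2)) (WUplus z1 z2)) g"
    by simp
  finally show "wsem D P (WUplus (WTimes (WConst d1) z1) (WTimes (WConst d2) z2)) g =
        wsem D P (WTimes (WTimes (WConst d1) (WConst d2)) (WUplus z1 z2)) g" .
qed

end
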